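(* Let $X_1, X_2, \ldots$ be independent random variables, each uniformly distributed on $[-1,1]$, and fix $\varepsilon > 0$. For $t \ge 0$ and $z \in \mathbb{R}$, let $f_t(z) = 1$ if there exists $S \subseteq \{1,\dots,t\}$ with $\lvert z - \sum_{i \in S} X_i \rvert < \varepsilon$, and $f_t(z) = 0$ otherwise; let $v_t = \frac{1}{2}\int_{-1}^{1} f_t(z)\,\mathrm{d}z$, and let $\tau_1 = \min\{t \ge 0 : v_t > 1/2\}$. Given $\beta \in (0, 1/8)$, let $p_\beta = 1 - \frac{7}{8(1-\beta)}$. Then for all integers $0 \le t < \tau_1$, $$\Pr\left[v_{t+1} \ge v_t(1+\beta) \,\middle|\, X_1,\dots,X_t,\ t < \tau_1\right] \ge p_\beta.$$
   Context: $f_t$ is the indicator that $z$ can be approximated to within error strictly less than $\varepsilon$ by a subset sum of the first $t$ variables (the empty sum being $0$); $v_t$ is the fraction of $[-1,1]$ so approximated; $\tau_1$ is the first time this fraction exceeds $1/2$. *)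

theory Defs
  imports "HOL-Probability.Probability"
begin

text \<open>A realisation of the variables is a sequence x :: nat => real; x i is the
  value of X_i (indices start at 1).\<close>

definition approx_ind :: "real \<Rightarrow> nat \<Rightarrow> (nat \<Rightarrow> real) \<Rightarrow> real \<Rightarrow> real" where
  "approx_ind eps t x z =
     (if \<exists>S. S \<subseteq> {1..t} \<and> \<bar>z - (\<Sum>i\<in>S. x i)\<bar> < eps then 1 else 0)"

definition vfrac :: "real \<Rightarrow> nat \<Rightarrow> (nat \<Rightarrow> real) \<Rightarrow> real" where
  "vfrac eps t x = (1/2) * (\<integral>z\<in>{-1..1}. approx_ind eps t x z \<partial>lborel)"

definition tau1 :: "real \<Rightarrow> (nat \<Rightarrow> real) \<Rightarrow> enat" where
  "tau1 eps x = (if \<exists>t. vfrac eps t x > 1/2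
                 then enat (LEAST t. vfrac eps t x > 1/2) else \<infinity>)"

definition p_beta :: "real \<Rightarrow> real" where
  "p_beta \<beta> = 1 - 7 / (8 * (1 - \<beta>))"

end

theory Submission
  imports Defs
begin

text \<open>Let A be the set of points approximable after t steps, B = A \<inter> [-1,1] and
  M = |B| = 2 v_t \<le> 1. Adding the value y covers at least the new points ([-1,1] - B) \<inter> (y + B),
  of measure g(y) = shift_gain B y \<le> M. Counting the pairs (y, w) with w \<in> B and
  w + y \<in> [-1,1] - B in both orders gives \<integral>_[-1,1] g \<ge> \<integral>_B (2 - |w| - M) dw, and the bathtub
  principle \<integral>_B |w| dw \<le> M - M^2/4 turns this into \<integral>_[-1,1] g \<ge> M/4. Since g \<le> M, a reverse
  Markov inequality shows g \<ge> \<beta> M on a set of measure at least (1/4 - 2\<beta>)/(1 - \<beta>), i.e. of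
  probability at least p_\<beta>.\<close>

lemma image_plus_eq_vimage:
  fixes S :: "'a::ab_group_add set"
  shows "(+) c ` S = (+) (- c) -` S"
  by (force simp: image_iff algebra_simps)

lemma vimage_plus_borel [measurable]:
  fixes S :: "'a::euclidean_space set"
  assumes "S \<in> sets borel"
  shows "(+) c -` S \<in> sets borel"
proof -
  have "(+) c \<in> borel_measurable (borel :: 'a measure)"
    by measurable
  from measurable_sets_borel[OF this assms] show ?thesis
    by simp
qed

lemma image_plus_borel [measurable]:
  fixes S :: "'a::euclidean_space set"
  shows "S \<in> sets borel \<Longrightarrow> (+) c ` S \<in> sets borel"
  by (simp add: image_plus_eq_vimage vimage_plus_borel)

lemma emeasure_lborel_vimage_plus:
  fixes S :: "'a::euclidean_space set"
  assumes "S \<in> sets borel"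
  shows "emeasure lborel ((+) c -` S) = emeasure lborel S"
  using emeasure_distr[of "(+) c" lborel borel S] assms by (simp add: lborel_distr_plus)

lemma measure_lborel_vimage_plus:
  fixes S :: "'a::euclidean_space set"
  shows "S \<in> sets borel \<Longrightarrow> measure lborel ((+) c -` S) = measure lborel S"
  by (simp add: measure_def emeasure_lborel_vimage_plus)

lemma measure_lborel_image_plus:
  fixes S :: "'a::euclidean_space set"
  shows "S \<in> sets borel \<Longrightarrow> measure lborel ((+) c ` S) = measure lborel S"
  unfolding image_plus_eq_vimage by (rule measure_lborel_vimage_plus)

lemma fmeasurable_Icc [iff]: "{a..b::real} \<in> fmeasurable lborel"
  using fmeasurable_cbox[of a b] by simp

lemma fmeasurable_subset_Icc:
  fixes S :: "real set"
  shows "S \<in> sets borel \<Longrightarrow> S \<subseteq> {a..b} \<Longrightarrow> S \<in> fmeasurable lborel"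
  using fmeasurableI2[OF fmeasurable_Icc] by simp

lemma (in sigma_finite_measure) borel_measurable_measure_Pair:
  "Q \<in> sets (N \<Otimes>\<^sub>M M) \<Longrightarrow> (\<lambda>x. measure M (Pair x -` Q)) \<in> borel_measurable N"
  unfolding measure_def by (intro borel_measurable_enn2real measurable_emeasure_Pair)

lemma ennreal_diff_le_of_le_add:
  assumes "ennreal a \<le> x + ennreal b" "0 \<le> b"
  shows "ennreal (a - b) \<le> x"
proof -
  have "ennreal a - ennreal b \<le> x"
    using assms(1) unfolding ennreal_minus_le_iff by (simp add: add.commute)
  then show ?thesis
    using assms(2) by (simp add: ennreal_minus)
qed

lemma nn_integral_le_level_set:
  fixes g :: "'a \<Rightarrow> ennreal"
  assumes "S \<in> sets M" "{x \<in> S. b \<le> g x} \<in> sets M" and "\<And>x. x \<in> S \<Longrightarrow> g x \<le> K"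
  shows "(\<integral>\<^sup>+x\<in>S. g x \<partial>M)
    \<le> K * emeasure M {x \<in> S. b \<le> g x} + b * emeasure M (S - {x \<in> S. b \<le> g x})"
proof -
  let ?L = "{x \<in> S. b \<le> g x}"
  have "(\<integral>\<^sup>+x\<in>S. g x \<partial>M) \<le> (\<integral>\<^sup>+x. K * indicator ?L x + b * indicator (S - ?L) x \<partial>M)"
    using assms(3) by (intro nn_integral_mono) (auto simp: indicator_def not_le less_imp_le)
  also have "\<dots> = K * emeasure M ?L + b * emeasure M (S - ?L)"
    using assms(1,2) by (simp add: nn_integral_add nn_integral_cmult_indicator sets.Diff)
  finally show ?thesis .
qed

lemma measure_shift_into_complement_ge:
  fixes B :: "real set"
  assumes B: "B \<in> sets borel" "B \<subseteq> {-1..1}" and w: "w \<in> {-1..1}"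
  shows "2 - \<bar>w\<bar> - measure lborel B \<le> measure lborel {y \<in> {-1..1}. w + y \<in> {-1..1} - B}"
proof -
  define T where "T = {y \<in> {-1..1}. w + y \<in> {-1..1} - B}"
  have T_fin: "T \<in> fmeasurable lborel"
    using B(1) by (intro fmeasurable_subset_Icc[of _ "-1" 1]) (auto simp: T_def)
  have B_fin: "(+) w -` B \<in> fmeasurable lborel"
    using B by (intro fmeasurable_subset_Icc[of _ "-1 - w" "1 - w"]) auto
  have "{y \<in> {-1..1}. w + y \<in> {-1..1}} = {max (-1) (-1 - w) .. min 1 (1 - w)}"
    by auto
  then have "2 - \<bar>w\<bar> = measure lborel {y \<in> {-1..1}. w + y \<in> {-1..1}}"
    using w by (auto simp: abs_if)
  also have "\<dots> \<le> measure lborel (T \<union> (+) w -` B)"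
    using T_fin B_fin by (intro measure_mono_fmeasurable) (auto simp: T_def)
  also have "\<dots> \<le> measure lborel T + measure lborel B"
    using measure_Un_le[of T lborel "(+) w -` B"] fmeasurableD[OF T_fin] B(1)
    by (simp add: measure_lborel_vimage_plus)
  finally show ?thesis
    by (simp add: T_def)
qed

lemma nn_integral_abs_le_bathtub:
  fixes B :: "real set"
  assumes B [measurable]: "B \<in> sets borel" and B_sub: "B \<subseteq> {-1..1}"
  shows "(\<integral>\<^sup>+w\<in>B. ennreal \<bar>w\<bar> \<partial>lborel) \<le> ennreal (measure lborel B - (measure lborel B)\<^sup>2 / 4)"
proof -
  define M where "M = measure lborel B"
  define c where "c = 1 - M / 2"
  have "M \<le> measure lborel {-1..1::real}"
    unfolding M_def using B_sub by (intro measure_mono_fmeasurable) auto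
  then have c: "0 \<le> c" "c \<le> 1"
    by (auto simp: c_def M_def)
  have B_emeasure: "emeasure lborel B = ennreal M"
    using fmeasurable_subset_Icc[OF B B_sub] by (simp add: M_def emeasure_eq_measure2)
  \<comment> \<open>Bathtub principle: \<bar>w\<bar> \<le> c + max 0 (\<bar>w\<bar> - c), and the excess is integrated over all of [-1,1].\<close>
  have pointwise: "ennreal \<bar>w\<bar> * indicator B w \<le> ennreal c * indicator B w
      + (ennreal (w - c) * indicator {c..1} w + ennreal (- w - c) * indicator {-1..-c} w)" for w
  proof (cases "w \<in> B")
    case True
    then have "\<bar>w\<bar> \<le> 1"
      using B_sub by (auto simp: abs_le_iff)
    then have "ennreal \<bar>w\<bar> \<le> ennreal (c + (w - c) * indicator {c..1} w + (- w - c) * indicator {-1..-c} w)"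
      using c by (intro ennreal_leI) (auto simp: indicator_def)
    also have "\<dots> = ennreal c + (ennreal (w - c) * indicator {c..1} w + ennreal (- w - c) * indicator {-1..-c} w)"
      using c by (auto simp: indicator_def ennreal_plus[symmetric] simp del: ennreal_plus)
    finally show ?thesis
      using True by simp
  qed simp
  have right: "(\<integral>\<^sup>+w. ennreal (w - c) * indicator {c..1} w \<partial>lborel) = ennreal ((1 - c)\<^sup>2 / 2)"
    using c by (subst nn_integral_FTC_Icc[where F = "\<lambda>w. (w - c)\<^sup>2 / 2"])
      (auto intro!: derivative_eq_intros simp: power2_eq_square field_simps)
  have left: "(\<integral>\<^sup>+w. ennreal (- w - c) * indicator {-1..-c} w \<partial>lborel) = ennreal ((1 - c)\<^sup>2 / 2)"
    using c by (subst nn_integral_FTC_Icc[where F = "\<lambda>w. - (w + c)\<^sup>2 / 2"])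
      (auto intro!: derivative_eq_intros simp: power2_eq_square field_simps minus_divide_left)
  have "(\<integral>\<^sup>+w\<in>B. ennreal \<bar>w\<bar> \<partial>lborel) \<le> (\<integral>\<^sup>+w. ennreal c * indicator B w
      + (ennreal (w - c) * indicator {c..1} w + ennreal (- w - c) * indicator {-1..-c} w) \<partial>lborel)"
    by (intro nn_integral_mono pointwise)
  also have "\<dots> = ennreal c * ennreal M + (ennreal ((1 - c)\<^sup>2 / 2) + ennreal ((1 - c)\<^sup>2 / 2))"
    by (simp add: nn_integral_add nn_integral_cmult_indicator B_emeasure left right)
  also have "\<dots> = ennreal (c * M + (1 - c)\<^sup>2)"
    using c by (simp add: ennreal_mult'[symmetric] ennreal_plus[symmetric] M_def del: ennreal_plus)
  also have "c * M + (1 - c)\<^sup>2 = M - M\<^sup>2 / 4"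
    by (simp add: c_def power2_eq_square algebra_simps)
  finally show ?thesis
    by (simp add: M_def)
qed

lemma nn_integral_two_minus_abs_ge:
  fixes B :: "real set"
  assumes B [measurable]: "B \<in> sets borel" and B_sub: "B \<subseteq> {-1..1}" and M: "measure lborel B \<le> 1"
  shows "ennreal (measure lborel B / 4) \<le> (\<integral>\<^sup>+w\<in>B. ennreal (2 - \<bar>w\<bar> - measure lborel B) \<partial>lborel)"
proof -
  define M where "M = measure lborel B"
  have M_bounds: "0 \<le> M" "M \<le> 1"
    using M by (auto simp: M_def)
  have "ennreal ((2 - M) * M) = (\<integral>\<^sup>+w\<in>B. ennreal (2 - M) \<partial>lborel)"
    using fmeasurable_subset_Icc[OF B B_sub] M_bounds
    by (simp add: nn_integral_cmult_indicator emeasure_eq_measure2 ennreal_mult M_def)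
  also have "\<dots> = (\<integral>\<^sup>+w\<in>B. ennreal (2 - \<bar>w\<bar> - M) + ennreal \<bar>w\<bar> \<partial>lborel)"
  proof (intro nn_integral_cong)
    fix w
    have "w \<in> B \<Longrightarrow> \<bar>w\<bar> \<le> 1"
      using B_sub by (auto simp: abs_le_iff)
    then have "w \<in> B \<Longrightarrow> ennreal (2 - M) = ennreal (2 - \<bar>w\<bar> - M) + ennreal \<bar>w\<bar>"
      using M_bounds by (subst ennreal_plus[symmetric]) auto
    then show "ennreal (2 - M) * indicator B w = (ennreal (2 - \<bar>w\<bar> - M) + ennreal \<bar>w\<bar>) * indicator B w"
      by (simp add: indicator_def)
  qed
  also have "\<dots> = (\<integral>\<^sup>+w\<in>B. ennreal (2 - \<bar>w\<bar> - M) \<partial>lborel) + (\<integral>\<^sup>+w\<in>B. ennreal \<bar>w\<bar> \<partial>lborel)"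
    by (simp add: distrib_right nn_integral_add)
  also have "\<dots> \<le> (\<integral>\<^sup>+w\<in>B. ennreal (2 - \<bar>w\<bar> - M) \<partial>lborel) + ennreal (M - M\<^sup>2 / 4)"
    using nn_integral_abs_le_bathtub[OF B B_sub] by (simp add: M_def add_left_mono)
  finally have "ennreal ((2 - M) * M - (M - M\<^sup>2 / 4)) \<le> (\<integral>\<^sup>+w\<in>B. ennreal (2 - \<bar>w\<bar> - M) \<partial>lborel)"
    by (rule ennreal_diff_le_of_le_add)
      (use mult_left_le[OF M_bounds(2) M_bounds(1)] M_bounds(1) in \<open>simp add: power2_eq_square\<close>)
  moreover have "M / 4 \<le> (2 - M) * M - (M - M\<^sup>2 / 4)"
    using mult_left_le[OF M_bounds(2) M_bounds(1)] by (simp add: power2_eq_square algebra_simps)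
  ultimately show ?thesis
    unfolding M_def using ennreal_leI order_trans by blast
qed

definition shift_gain :: "real set \<Rightarrow> real \<Rightarrow> real" where
  "shift_gain A y = measure lborel (({-1..1} - A) \<inter> (+) y ` A)"

lemma shift_gain_nonneg [simp]: "0 \<le> shift_gain A y"
  by (simp add: shift_gain_def)

lemma borel_measurable_shift_gain [measurable]:
  assumes [measurable]: "A \<in> sets borel"
  shows "shift_gain A \<in> borel_measurable borel"
proof -
  define Q where
    "Q = {p \<in> space (lborel \<Otimes>\<^sub>M lborel). snd p \<in> {-1..1} - A \<and> snd p - fst p \<in> A}"
  have "Q \<in> sets (lborel \<Otimes>\<^sub>M lborel)"
    unfolding Q_def by measurable
  moreover have "shift_gain A = (\<lambda>y. measure lborel (Pair y -` Q))"
    by (auto simp: fun_eq_iff shift_gain_def Q_def space_pair_measure image_plus_eq_vimage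
        intro!: arg_cong[where f = "measure lborel"])
  ultimately show ?thesis
    using lborel.borel_measurable_measure_Pair by simp
qed

lemma measure_Un_image_plus_Int_Icc:
  fixes A :: "real set"
  assumes [measurable]: "A \<in> sets borel"
  shows "measure lborel ((A \<union> (+) y ` A) \<inter> {-1..1}) = measure lborel (A \<inter> {-1..1}) + shift_gain A y"
proof -
  have split: "(A \<union> (+) y ` A) \<inter> {-1..1} = (A \<inter> {-1..1}) \<union> (({-1..1} - A) \<inter> (+) y ` A)"
    by auto
  have "A \<inter> {-1..1} \<in> fmeasurable lborel" "({-1..1} - A) \<inter> (+) y ` A \<in> fmeasurable lborel"
    by (auto intro: fmeasurable_subset_Icc)
  then show ?thesis
    unfolding shift_gain_def split by (intro measure_Union) (auto simp: fmeasurable_def)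
qed

lemma shift_gain_Int_Icc_le:
  fixes A :: "real set"
  assumes [measurable]: "A \<in> sets borel"
  shows "shift_gain (A \<inter> {-1..1}) y \<le> shift_gain A y"
  unfolding shift_gain_def
  by (intro measure_mono_fmeasurable fmeasurable_subset_Icc) auto

lemma shift_gain_le:
  fixes B :: "real set"
  assumes [measurable]: "B \<in> sets borel" and "B \<subseteq> {-1..1}"
  shows "shift_gain B y \<le> measure lborel B"
proof -
  have "shift_gain B y \<le> measure lborel ((+) y ` B)"
    unfolding shift_gain_def
    using assms by (intro measure_mono_fmeasurable fmeasurable_subset_Icc[of _ "y - 1" "y + 1"]) auto
  then show ?thesis
    by (simp add: measure_lborel_image_plus)
qed

lemma nn_integral_shift_gain_ge:
  fixes B :: "real set"
  assumes B [measurable]: "B \<in> sets borel" and B_sub: "B \<subseteq> {-1..1}" and M: "measure lborel B \<le> 1"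
  shows "ennreal (measure lborel B / 4) \<le> (\<integral>\<^sup>+y\<in>{-1..1}. ennreal (shift_gain B y) \<partial>lborel)"
proof -
  define W where "W = {p \<in> space (lborel \<Otimes>\<^sub>M lborel).
    fst p \<in> {-1..1} \<and> snd p \<in> B \<and> snd p + fst p \<in> {-1..1} - B}"
  have W [measurable]: "W \<in> sets (lborel \<Otimes>\<^sub>M lborel)"
    unfolding W_def by measurable
  have section_fst: "ennreal (2 - \<bar>w\<bar> - measure lborel B) * indicator B w
      \<le> emeasure lborel ((\<lambda>y. (y, w)) -` W)" for w
  proof (cases "w \<in> B")
    case True
    have "(\<lambda>y. (y, w)) -` W = {y \<in> {-1..1}. w + y \<in> {-1..1} - B}"
      using True by (auto simp: W_def space_pair_measure add.commute)
    moreover have "{y \<in> {-1..1}. w + y \<in> {-1..1} - B} \<in> fmeasurable lborel"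
      by (rule fmeasurable_subset_Icc) auto
    ultimately show ?thesis
      using measure_shift_into_complement_ge[OF B B_sub, of w] True B_sub
      by (auto simp: emeasure_eq_measure2 intro!: ennreal_leI)
  qed simp
  have section_snd: "emeasure lborel (Pair y -` W) = ennreal (shift_gain B y) * indicator {-1..1} y" for y
  proof (cases "y \<in> {-1..1}")
    case True
    have "Pair y -` W = (+) y -` (({-1..1} - B) \<inter> (+) y ` B)"
      using True by (auto simp: W_def space_pair_measure add.commute)
    then have "emeasure lborel (Pair y -` W) = emeasure lborel (({-1..1} - B) \<inter> (+) y ` B)"
      by (simp only: emeasure_lborel_vimage_plus sets.Int sets.Diff image_plus_borel B atLeastAtMost_borel)
    moreover have "({-1..1} - B) \<inter> (+) y ` B \<in> fmeasurable lborel"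
      by (rule fmeasurable_subset_Icc) auto
    ultimately show ?thesis
      using True by (simp add: emeasure_eq_measure2 shift_gain_def)
  qed (auto simp: W_def)
  have "ennreal (measure lborel B / 4) \<le> (\<integral>\<^sup>+w\<in>B. ennreal (2 - \<bar>w\<bar> - measure lborel B) \<partial>lborel)"
    by (rule nn_integral_two_minus_abs_ge[OF B B_sub M])
  also have "\<dots> \<le> (\<integral>\<^sup>+w. emeasure lborel ((\<lambda>y. (y, w)) -` W) \<partial>lborel)"
    by (intro nn_integral_mono section_fst)
  also have "\<dots> = emeasure (lborel \<Otimes>\<^sub>M lborel) W"
    by (rule lborel_pair.emeasure_pair_measure_alt2[OF W, symmetric])
  also have "\<dots> = (\<integral>\<^sup>+y. emeasure lborel (Pair y -` W) \<partial>lborel)"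
    by (rule lborel.emeasure_pair_measure_alt[OF W])
  finally show ?thesis
    by (simp add: section_snd)
qed

lemma measure_large_shift_gain_ge:
  fixes B :: "real set" and \<beta> :: real
  assumes B [measurable]: "B \<in> sets borel" and B_sub: "B \<subseteq> {-1..1}"
    and M: "measure lborel B \<le> 1" and \<beta>: "0 \<le> \<beta>"
  shows "1/4 - 2 * \<beta> \<le> (1 - \<beta>) * measure lborel {y \<in> {-1..1}. \<beta> * measure lborel B \<le> shift_gain B y}"
proof -
  define M where "M = measure lborel B"
  define L where "L = {y \<in> {-1..1}. \<beta> * M \<le> shift_gain B y}"
  define m where "m = measure lborel L"
  have L [measurable]: "L \<in> sets borel"
    unfolding L_def by measurable
  have L_sub: "L \<subseteq> {-1..1}"
    by (auto simp: L_def)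
  then have L_fin: "L \<in> fmeasurable lborel"
    by (intro fmeasurable_subset_Icc) auto
  have m: "0 \<le> m" "m \<le> 2"
    using measure_mono_fmeasurable[OF L_sub, of lborel] by (auto simp: m_def)
  show ?thesis
  proof (cases "M = 0")
    case True
    then have "L = {-1..1}"
      by (auto simp: L_def)
    then show ?thesis
      using \<beta> by (simp add: M_def L_def)
  next
    case False
    then have M_pos: "0 < M"
      by (simp add: M_def order_neq_le_trans)
    have L_ennreal: "L = {y \<in> {-1..1}. ennreal (\<beta> * M) \<le> ennreal (shift_gain B y)}"
      by (auto simp: L_def)
    have "ennreal (M / 4) \<le> (\<integral>\<^sup>+y\<in>{-1..1}. ennreal (shift_gain B y) \<partial>lborel)"
      unfolding M_def by (rule nn_integral_shift_gain_ge[OF B B_sub M])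
    also have "\<dots> \<le> ennreal M * emeasure lborel L + ennreal (\<beta> * M) * emeasure lborel ({-1..1} - L)"
      unfolding L_ennreal using shift_gain_le[OF B B_sub]
      by (intro nn_integral_le_level_set) (auto simp: M_def simp flip: L_ennreal)
    also have "\<dots> = ennreal (M * m + \<beta> * M * (2 - m))"
    proof -
      have "measure lborel ({-1..1} - L) = 2 - m"
        using L_sub by (subst measure_Diff) (auto simp: m_def)
      then show ?thesis
        using L_fin m M_pos \<beta>
        by (simp add: emeasure_eq_measure2 fmeasurable_Diff m_def[symmetric] ennreal_mult'[symmetric]
            ennreal_plus[symmetric] del: ennreal_plus)
    qed
    finally have "M / 4 \<le> M * m + \<beta> * M * (2 - m)"
      using M_pos m \<beta> by (subst (asm) ennreal_le_iff) auto
    then have "M * (1/4 - 2 * \<beta>) \<le> M * ((1 - \<beta>) * m)"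
      by (simp add: algebra_simps)
    then show ?thesis
      using M_pos by (simp add: M_def L_def m_def)
  qed
qed

definition approx_set :: "real \<Rightarrow> nat \<Rightarrow> (nat \<Rightarrow> real) \<Rightarrow> real set" where
  "approx_set eps t x = {z. \<exists>S. S \<subseteq> {1..t} \<and> \<bar>z - (\<Sum>i\<in>S. x i)\<bar> < eps}"

lemma approx_ind_eq_indicator: "approx_ind eps t x = indicator (approx_set eps t x)"
  by (auto simp: approx_ind_def approx_set_def indicator_def fun_eq_iff)

lemma approx_set_eq_UN_ball:
  "approx_set eps t x = (\<Union>S\<in>Pow {1..t}. ball (\<Sum>i\<in>S. x i) eps)"
  by (auto simp: approx_set_def dist_real_def abs_minus_commute)

lemma approx_set_borel [measurable]: "approx_set eps t x \<in> sets borel"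
  unfolding approx_set_eq_UN_ball by (intro borel_open open_UN) auto

lemma approx_set_Suc_fun_upd:
  "approx_set eps (Suc t) (x(Suc t := y)) = approx_set eps t x \<union> (+) y ` approx_set eps t x"
proof -
  have sum_upd: "(\<Sum>i\<in>S. (x(Suc t := y)) i) = (\<Sum>i\<in>S. x i)" if "S \<subseteq> {1..t}" for S
    using that by (intro sum.cong) auto
  have sum_insert_upd: "(\<Sum>i\<in>insert (Suc t) S. (x(Suc t := y)) i) = (\<Sum>i\<in>S. x i) + y"
    if "S \<subseteq> {1..t}" for S
    using that sum_upd[OF that] finite_subset[OF that] by (subst sum.insert) auto
  have Pow_Suc: "Pow {1..Suc t} = Pow {1..t} \<union> insert (Suc t) ` Pow {1..t}"
    by (simp add: atLeastAtMostSuc_conv Pow_insert)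
  show ?thesis
    unfolding approx_set_eq_UN_ball Pow_Suc image_UN UN_Un
    by (simp add: sum_upd sum_insert_upd del: fun_upd_apply cong: SUP_cong_simp)
qed

lemma vfrac_eq_measure: "vfrac eps t x = measure lborel (approx_set eps t x \<inter> {-1..1}) / 2"
proof -
  have "(\<integral>z\<in>{-1..1}. approx_ind eps t x z \<partial>lborel)
      = (\<integral>z. indicator (approx_set eps t x \<inter> {-1..1}) z \<partial>lborel)"
    unfolding set_lebesgue_integral_def approx_ind_eq_indicator
    by (simp add: indicator_inter_arith mult.commute)
  then show ?thesis
    by (simp add: vfrac_def)
qed

lemma vfrac_le_half_if_less_tau1:
  assumes "enat t < tau1 eps x"
  shows "vfrac eps t x \<le> 1/2"
proof (cases "\<exists>t. vfrac eps t x > 1/2")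
  case True
  then have "t < (LEAST t. vfrac eps t x > 1/2)"
    using assms by (simp add: tau1_def)
  then show ?thesis
    using not_less_Least by fastforce
qed (meson not_less)

lemma p_beta_le_half:
  fixes \<beta> m :: real
  assumes "\<beta> < 1" and "1/4 - 2 * \<beta> \<le> (1 - \<beta>) * m"
  shows "p_beta \<beta> \<le> m / 2"
proof -
  have "(1 - \<beta>) * (2 * p_beta \<beta>) = 1/4 - 2 * \<beta>"
    using assms(1) by (simp add: p_beta_def field_simps)
  then have "(1 - \<beta>) * (2 * p_beta \<beta>) \<le> (1 - \<beta>) * m"
    using assms(2) by linarith
  then show ?thesis
    using assms(1) by simp
qed

theorem lemma3:
  fixes eps \<beta> :: real and t :: nat and x :: "nat \<Rightarrow> real"
  assumes "eps > 0" and "0 < \<beta>" and "\<beta> < 1/8"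
    and "\<forall>i\<in>{1..t}. x i \<in> {-1..1}"
    and "enat t < tau1 eps x"
  shows "prob_space.prob (uniform_measure lborel {-1..1::real})
           {y. vfrac eps (Suc t) (x(Suc t := y)) \<ge> vfrac eps t x * (1 + \<beta>)}
         \<ge> p_beta \<beta>"
proof -
  define A where "A = approx_set eps t x"
  define M where "M = measure lborel (A \<inter> {-1..1})"
  define E where "E = {y. \<beta> * M \<le> shift_gain A y}"
  define L where "L = {y \<in> {-1..1}. \<beta> * M \<le> shift_gain (A \<inter> {-1..1}) y}"
  have A [measurable]: "A \<in> sets borel"
    by (simp add: A_def)
  have L [measurable]: "L \<in> sets borel"
    unfolding L_def by measurable
  have M_le: "M \<le> 1"
    using vfrac_le_half_if_less_tau1[OF assms(5)] by (simp add: vfrac_eq_measure A_def M_def)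
  have event: "{y. vfrac eps (Suc t) (x(Suc t := y)) \<ge> vfrac eps t x * (1 + \<beta>)} = E"
    by (auto simp: E_def vfrac_eq_measure approx_set_Suc_fun_upd measure_Un_image_plus_Int_Icc
        A_def[symmetric] M_def[symmetric] algebra_simps)
  have "p_beta \<beta> \<le> measure lborel L / 2"
    using measure_large_shift_gain_ge[of "A \<inter> {-1..1}" \<beta>] M_le assms(2,3)
    by (intro p_beta_le_half) (auto simp: L_def M_def)
  also have "\<dots> \<le> measure lborel ({-1..1} \<inter> E) / 2"
    using shift_gain_Int_Icc_le[OF A]
    by (intro divide_right_mono measure_mono_fmeasurable fmeasurable_subset_Icc)
      (auto simp: L_def E_def intro: order_trans)
  finally show ?thesis
    unfolding event by (simp add: E_def)
qed

end
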